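(* For every positive integer $m$, let $\mathcal{G}^{r}_m$ be the set of all directed acyclic graphs on the labeled vertex set $[m]=\{1,\dots,m\}$ whose Markov equivalence class has exactly one element. Then $$2^{\frac{m(m-3)}{2}+1}\le |\mathcal{G}^{r}_m|\le m!\,2^{\frac{m(m-1)}{2}},$$ and in particular $\log|\mathcal{G}^{r}_m|\ge \left(\frac{m(m-3)}{2}+1\right)\log 2$.
   Context: Two DAGs on the same vertex set are Markov equivalent if they encode exactly the same conditional independence statements among the associated random variables (equivalently, they have the same skeleton and the same v-structures). The Markov equivalence class of $G$ is the set of DAGs Markov equivalent to $G$. *)

theory Defs
  imports Complex_Main
begin

definition is_dag :: "'a set \<Rightarrow> ('a \<times> 'a) set \<Rightarrow> bool" where
  "is_dag V E \<longleftrightarrow> E \<subseteq> V \<times> V \<and> acyclic E"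

definition adjacent :: "('a \<times> 'a) set \<Rightarrow> 'a \<Rightarrow> 'a \<Rightarrow> bool" where
  "adjacent E u v \<longleftrightarrow> (u, v) \<in> E \<or> (v, u) \<in> E"

definition is_path :: "('a \<times> 'a) set \<Rightarrow> 'a list \<Rightarrow> bool" where
  "is_path E p \<longleftrightarrow> p \<noteq> [] \<and> distinct p \<and> (\<forall>i. Suc i < length p \<longrightarrow> adjacent E (p ! i) (p ! Suc i))"

definition collider :: "('a \<times> 'a) set \<Rightarrow> 'a list \<Rightarrow> nat \<Rightarrow> bool" where
  "collider E p i \<longleftrightarrow> (p ! (i - 1), p ! i) \<in> E \<and> (p ! Suc i, p ! i) \<in> E"

definition blocked :: "('a \<times> 'a) set \<Rightarrow> 'a set \<Rightarrow> 'a list \<Rightarrow> bool" where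
  "blocked E Z p \<longleftrightarrow> (\<exists>i. 0 < i \<and> Suc i < length p \<and>
      ((\<not> collider E p i \<and> p ! i \<in> Z) \<or>
       (collider E p i \<and> (\<forall>w. (p ! i, w) \<in> E\<^sup>* \<longrightarrow> w \<notin> Z))))"

definition d_separated :: "('a \<times> 'a) set \<Rightarrow> 'a set \<Rightarrow> 'a set \<Rightarrow> 'a set \<Rightarrow> bool" where
  "d_separated E A B Z \<longleftrightarrow> (\<forall>p. is_path E p \<and> hd p \<in> A \<and> last p \<in> B \<longrightarrow> blocked E Z p)"

definition CI_statements :: "'a set \<Rightarrow> ('a \<times> 'a) set \<Rightarrow> ('a set \<times> 'a set \<times> 'a set) set" where
  "CI_statements V E = {(A, B, Z). A \<subseteq> V \<and> B \<subseteq> V \<and> Z \<subseteq> V \<and> A \<noteq> {} \<and> B \<noteq> {} \<and>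
      A \<inter> B = {} \<and> A \<inter> Z = {} \<and> B \<inter> Z = {} \<and> d_separated E A B Z}"

definition markov_equivalent :: "'a set \<Rightarrow> ('a \<times> 'a) set \<Rightarrow> ('a \<times> 'a) set \<Rightarrow> bool" where
  "markov_equivalent V E1 E2 \<longleftrightarrow> is_dag V E1 \<and> is_dag V E2 \<and> CI_statements V E1 = CI_statements V E2"

definition MEC :: "'a set \<Rightarrow> ('a \<times> 'a) set \<Rightarrow> ('a \<times> 'a) set set" where
  "MEC V E = {E'. markov_equivalent V E E'}"

definition G_r :: "nat \<Rightarrow> (nat \<times> nat) set set" where
  "G_r m = {E. is_dag {1..m} E \<and> card (MEC {1..m} E) = 1}"

end

theory Submission
  imports Defs "HOL-Library.FuncSet"
begin

text \<open>Markov equivalent DAGs have the same skeleton and the same v-structures. Hence a DAG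
  whose vertices are numbered in a topological order is alone in its Markov equivalence class as
  soon as every edge \<open>s \<rightarrow> k\<close> is protected: it lies in a v-structure at \<open>k\<close>, or \<open>s\<close> has a
  parent that is not a parent of \<open>k\<close>, or \<open>s \<rightarrow> u \<rightarrow> k\<close> for some \<open>u\<close>; induction along the
  numbering then forces every edge of an equivalent DAG to point the same way. Adding the vertices
  \<open>1, \<dots>, m\<close> one at a time, vertex \<open>k\<close> can be attached in \<open>2 ^ (k - 2)\<close> different ways
  keeping all edges protected, which gives \<open>2 ^ ((m - 1) choose 2)\<close> such DAGs. For the upper
  bound, every DAG arises from a DAG on one vertex fewer by adding a sink with an arbitrary set of
  parents.\<close>

lemma acyclic_not_refl: "acyclic E \<Longrightarrow> (a, a) \<notin> E"
  unfolding acyclic_def by blast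

lemma acyclic_asym: "acyclic E \<Longrightarrow> (a, b) \<in> E \<Longrightarrow> (b, a) \<notin> E"
  unfolding acyclic_def by (meson r_into_trancl trancl_into_trancl2)

lemma adjacent_sym: "adjacent E u v \<longleftrightarrow> adjacent E v u"
  unfolding adjacent_def by blast

definition parents :: "('a \<times> 'a) set \<Rightarrow> 'a \<Rightarrow> 'a set" where
  "parents E v = {u. (u, v) \<in> E}"

lemma adjacent_not_d_separated:
  assumes "adjacent E u v" "u \<noteq> v"
  shows "\<not> d_separated E {u} {v} Z"
proof -
  have "is_path E [u, v]" using assms unfolding is_path_def by (auto simp: less_Suc_eq)
  moreover have "\<not> blocked E Z [u, v]" unfolding blocked_def by auto
  ultimately show ?thesis unfolding d_separated_def by force
qed

lemma non_collider_not_d_separated: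
  assumes "adjacent E a z" "adjacent E z b" "distinct [a, z, b]"
    and "(a, z) \<notin> E \<or> (b, z) \<notin> E" "z \<notin> Z"
  shows "\<not> d_separated E {a} {b} Z"
proof -
  have "is_path E [a, z, b]" using assms unfolding is_path_def
    by (auto simp: less_Suc_eq nth_Cons split: nat.splits)
  moreover have "\<not> blocked E Z [a, z, b]" using assms unfolding blocked_def collider_def
    by (auto simp: less_Suc_eq)
  ultimately show ?thesis unfolding d_separated_def by force
qed

lemma path_descends_from_head:
  assumes path: "is_path E p" and out: "(p ! 0, p ! 1) \<in> E" and "j < length p"
    and no_collider: "\<forall>i. 0 < i \<and> i < j \<longrightarrow> \<not> collider E p i"
  shows "(p ! 0, p ! j) \<in> E\<^sup>*"
proof -
  have "(p ! 0, p ! i) \<in> E\<^sup>* \<and> (0 < i \<longrightarrow> (p ! (i - 1), p ! i) \<in> E)" if "i \<le> j" for i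
    using that
  proof (induction i)
    case 0
    show ?case by simp
  next
    case (Suc i)
    have "(p ! i, p ! Suc i) \<in> E"
    proof (cases "i = 0")
      case True
      then show ?thesis using out by simp
    next
      case False
      then have "(p ! (i - 1), p ! i) \<in> E" "\<not> collider E p i"
        using Suc no_collider by auto
      then have "(p ! Suc i, p ! i) \<notin> E" unfolding collider_def by simp
      moreover have "adjacent E (p ! i) (p ! Suc i)"
        using path Suc.prems \<open>j < length p\<close> unfolding is_path_def by simp
      ultimately show ?thesis unfolding adjacent_def by blast
    qed
    moreover have "(p ! 0, p ! i) \<in> E\<^sup>*" using Suc by simp
    ultimately show ?case by simp
  qed
  then show ?thesis by blast
qed

lemma d_separated_by_parents:
  assumes acyc: "acyclic E" and "u \<noteq> v" and nonadj: "\<not> adjacent E u v"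
    and nondesc: "(u, v) \<notin> E\<^sup>*"
  shows "d_separated E {u} {v} (parents E u)"
  unfolding d_separated_def
proof (intro allI impI)
  fix p assume "is_path E p \<and> hd p \<in> {u} \<and> last p \<in> {v}"
  then have path: "is_path E p" and head: "p ! 0 = u" and last: "p ! (length p - 1) = v"
    by (auto simp: is_path_def hd_conv_nth last_conv_nth)
  have "length p \<noteq> 1" using head last \<open>u \<noteq> v\<close> by auto
  moreover have "length p \<noteq> 0" using path unfolding is_path_def by simp
  ultimately have len: "2 \<le> length p" by linarith
  then have "adjacent E u (p ! 1)"
    using path head unfolding is_path_def by (auto dest: spec[of _ 0])
  then consider (into_head) "(p ! 1, u) \<in> E" | (out_of_head) "(u, p ! 1) \<in> E"
    unfolding adjacent_def by blast
  then show "blocked E (parents E u) p"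
  proof cases
    case into_head
    then have "p ! 1 \<noteq> v" using nonadj unfolding adjacent_def by auto
    then have "Suc 1 < length p" using len last by (cases "length p = 2") auto
    moreover have "\<not> collider E p 1"
      using into_head head acyclic_asym[OF acyc] unfolding collider_def by auto
    ultimately show ?thesis
      using into_head head unfolding blocked_def parents_def by (intro exI[of _ 1]) auto
  next
    case out_of_head
    have "\<exists>i. 0 < i \<and> Suc i < length p \<and> collider E p i"
    proof (rule ccontr)
      assume "\<not> ?thesis"
      then have "(u, v) \<in> E\<^sup>*"
        using path_descends_from_head[OF path _ _, of "length p - 1"] out_of_head head last len
        by fastforce
      then show False using nondesc by simp
    qed
    then obtain c where c: "0 < c" "Suc c < length p" "collider E p c"
      and first: "\<forall>i<c. \<not> (0 < i \<and> Suc i < length p \<and> collider E p i)"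
      unfolding exists_least_iff[where P = "\<lambda>i. 0 < i \<and> Suc i < length p \<and> collider E p i"]
      by blast
    have "(u, p ! c) \<in> E\<^sup>*"
      using path_descends_from_head[OF path _ _, of c] out_of_head head c first by fastforce
    have "w \<notin> parents E u" if "(p ! c, w) \<in> E\<^sup>*" for w
    proof
      assume "w \<in> parents E u"
      have "(u, w) \<in> E\<^sup>*" using \<open>(u, p ! c) \<in> E\<^sup>*\<close> that by (rule rtrancl_trans)
      then have "(u, u) \<in> E\<^sup>+"
        using \<open>w \<in> parents E u\<close> unfolding parents_def by (simp add: rtrancl_into_trancl1)
      then show False using acyc unfolding acyclic_def by blast
    qed
    then show ?thesis using c unfolding blocked_def by blast
  qed
qed

lemma nonadjacent_CI_statement:
  assumes dag: "is_dag V E" and "u \<in> V" "v \<in> V" "u \<noteq> v" "\<not> adjacent E u v"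
  obtains a b where "{a, b} = {u, v}" "a \<noteq> b" "({a}, {b}, parents E a) \<in> CI_statements V E"
proof -
  have acyc: "acyclic E" and sub: "E \<subseteq> V \<times> V" using dag unfolding is_dag_def by auto
  have CI: "({a}, {b}, parents E a) \<in> CI_statements V E"
    if "a \<in> V" "b \<in> V" "a \<noteq> b" "\<not> adjacent E a b" "(a, b) \<notin> E\<^sup>*" for a b
    using that d_separated_by_parents[OF acyc] acyclic_not_refl[OF acyc] sub
    unfolding CI_statements_def parents_def adjacent_def by auto
  have "(u, v) \<notin> E\<^sup>* \<or> (v, u) \<notin> E\<^sup>*"
    using acyclic_impl_antisym_rtrancl[OF acyc] \<open>u \<noteq> v\<close> by (auto dest: antisymD)
  then show ?thesis
  proof
    assume "(u, v) \<notin> E\<^sup>*"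
    then show ?thesis using that[of u v] CI[of u v] assms(2-5) by blast
  next
    assume "(v, u) \<notin> E\<^sup>*"
    then show ?thesis
      using that[of v u] CI[of v u] assms(2-5) adjacent_sym[of E u v] by (simp add: insert_commute)
  qed
qed

lemma markov_equivalent_sym: "markov_equivalent V E E' \<Longrightarrow> markov_equivalent V E' E"
  unfolding markov_equivalent_def by auto

lemma markov_equivalent_adjacent:
  assumes me: "markov_equivalent V E E'" and adj: "adjacent E u v"
  shows "adjacent E' u v"
proof (rule ccontr)
  assume nonadj: "\<not> adjacent E' u v"
  have dag: "is_dag V E" "is_dag V E'" and CI: "CI_statements V E' = CI_statements V E"
    using me unfolding markov_equivalent_def by auto
  have acyc: "acyclic E" and sub: "E \<subseteq> V \<times> V" using dag(1) unfolding is_dag_def by auto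
  have "u \<in> V" "v \<in> V" "u \<noteq> v"
    using adj sub acyclic_not_refl[OF acyc] unfolding adjacent_def by auto
  then obtain a b where ab: "{a, b} = {u, v}" "a \<noteq> b"
    and "({a}, {b}, parents E' a) \<in> CI_statements V E'"
    by (rule nonadjacent_CI_statement[OF dag(2) _ _ _ nonadj])
  then have "({a}, {b}, parents E' a) \<in> CI_statements V E" using CI by simp
  then have "d_separated E {a} {b} (parents E' a)" unfolding CI_statements_def by simp
  moreover have "adjacent E a b" using ab adj unfolding doubleton_eq_iff adjacent_def by auto
  then have "\<not> d_separated E {a} {b} (parents E' a)"
    using \<open>a \<noteq> b\<close> by (rule adjacent_not_d_separated)
  ultimately show False by contradiction
qed

lemma markov_equivalent_v_structure:
  assumes me: "markov_equivalent V E E'" and xz: "(x, z) \<in> E" and yz: "(y, z) \<in> E"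
    and "x \<noteq> y" and nonadj: "\<not> adjacent E x y"
  shows "(x, z) \<in> E'"
proof (rule ccontr)
  assume not_xz: "(x, z) \<notin> E'"
  have dag: "is_dag V E" and CI: "CI_statements V E = CI_statements V E'"
    using me unfolding markov_equivalent_def by auto
  have acyc: "acyclic E" using dag unfolding is_dag_def by simp
  have "x \<in> V" "y \<in> V" using dag xz yz unfolding is_dag_def by auto
  then obtain a b where ab: "{a, b} = {x, y}" "a \<noteq> b"
    and "({a}, {b}, parents E a) \<in> CI_statements V E"
    by (rule nonadjacent_CI_statement[OF dag _ _ \<open>x \<noteq> y\<close> nonadj])
  then have "({a}, {b}, parents E a) \<in> CI_statements V E'" using CI by simp
  then have "d_separated E' {a} {b} (parents E a)" unfolding CI_statements_def by simp
  moreover have "\<not> d_separated E' {a} {b} (parents E a)"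
  proof (rule non_collider_not_d_separated)
    have "adjacent E a z" "adjacent E z b"
      using ab xz yz unfolding doubleton_eq_iff adjacent_def by auto
    then show "adjacent E' a z" "adjacent E' z b" by (auto intro: markov_equivalent_adjacent[OF me])
    show "distinct [a, z, b]"
      using ab \<open>a \<noteq> b\<close> xz yz acyclic_not_refl[OF acyc] unfolding doubleton_eq_iff by auto
    show "(a, z) \<notin> E' \<or> (b, z) \<notin> E'" using ab not_xz unfolding doubleton_eq_iff by auto
    show "z \<notin> parents E a"
      using ab xz yz acyclic_asym[OF acyc] unfolding doubleton_eq_iff parents_def by auto
  qed
  ultimately show False by blast
qed

text \<open>Three of the configurations in which Andersson, Madigan and Perlman call an edge strongly
  protected.\<close>
definition protected_edge :: "('a \<times> 'a) set \<Rightarrow> 'a \<Rightarrow> 'a \<Rightarrow> bool" where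
  "protected_edge E s k \<longleftrightarrow>
     (\<exists>t. (t, k) \<in> E \<and> t \<noteq> s \<and> \<not> adjacent E s t) \<or>
     (\<exists>r. (r, s) \<in> E \<and> (r, k) \<notin> E) \<or>
     (\<exists>u. (s, u) \<in> E \<and> (u, k) \<in> E)"

lemma markov_equivalent_orient_from_parent:
  assumes me: "markov_equivalent V E E'" and rs: "(r, s) \<in> E" and sk: "(s, k) \<in> E"
    and nonadj: "\<not> adjacent E r k" and rs': "(r, s) \<in> E'"
  shows "(s, k) \<in> E'"
proof (rule ccontr)
  assume "(s, k) \<notin> E'"
  then have ks: "(k, s) \<in> E'"
    using markov_equivalent_adjacent[OF me, of s k] sk unfolding adjacent_def by blast
  have me': "markov_equivalent V E' E" using markov_equivalent_sym[OF me] .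
  have acyc: "acyclic E" using me unfolding markov_equivalent_def is_dag_def by simp
  have "\<not> adjacent E' k r"
    using markov_equivalent_adjacent[OF me', of k r] nonadj unfolding adjacent_def by blast
  moreover have "k \<noteq> r" using rs sk acyclic_asym[OF acyc] by blast
  ultimately have "(k, s) \<in> E" using markov_equivalent_v_structure[OF me' ks rs'] by blast
  then show False using sk acyclic_asym[OF acyc] by blast
qed

lemma markov_equivalent_orient_from_path:
  assumes me: "markov_equivalent V E E'" and sk: "(s, k) \<in> E"
    and "(s, u) \<in> E'" "(u, k) \<in> E'"
  shows "(s, k) \<in> E'"
proof -
  have acyc': "acyclic E'" using me unfolding markov_equivalent_def is_dag_def by simp
  have "(s, k) \<in> E'\<^sup>+" using assms(3,4) by auto
  then have "(k, s) \<notin> E'" using acyc' unfolding acyclic_def by (meson trancl_into_trancl)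
  then show ?thesis using markov_equivalent_adjacent[OF me, of s k] sk unfolding adjacent_def by blast
qed

lemma markov_equivalent_eq_if_subset:
  assumes me: "markov_equivalent V E E'" and "E \<subseteq> E'"
  shows "E' = E"
proof -
  have acyc': "acyclic E'" using me unfolding markov_equivalent_def is_dag_def by simp
  have "(a, b) \<in> E" if "(a, b) \<in> E'" for a b
  proof -
    have "adjacent E a b"
      using markov_equivalent_adjacent[OF markov_equivalent_sym[OF me]] that unfolding adjacent_def
      by blast
    moreover have "(b, a) \<notin> E" using \<open>E \<subseteq> E'\<close> acyclic_asym[OF acyc'] that by blast
    ultimately show ?thesis unfolding adjacent_def by blast
  qed
  then show ?thesis using \<open>E \<subseteq> E'\<close> by auto
qed

text \<open>Orientations propagate to an edge \<open>s \<rightarrow> k\<close> from edges with an earlier head, and from edges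
  with the same head and a later tail.\<close>
lemma markov_equivalent_eq_if_protected:
  fixes E E' :: "(nat \<times> nat) set"
  assumes me: "markov_equivalent V E E'"
    and ordered: "\<forall>(i, j)\<in>E. i < j"
    and protected: "\<forall>(s, k)\<in>E. protected_edge E s k"
  shows "E' = E"
proof (rule markov_equivalent_eq_if_subset[OF me], safe)
  fix s k assume "(s, k) \<in> E"
  then show "(s, k) \<in> E'"
  proof (induction k arbitrary: s rule: less_induct)
    case (less k)
    have earlier: "(a, b) \<in> E'" if "(a, b) \<in> E" "b < k" for a b
      using less.IH that by blast
    show ?case
      using less.prems
    proof (induction s rule: measure_induct_rule[of "\<lambda>s. k - s"])
      case (less s)
      from protected less.prems consider
          (v_structure) t where "(t, k) \<in> E" "t \<noteq> s" "\<not> adjacent E s t"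
        | (parent) r where "(r, s) \<in> E" "(r, k) \<notin> E"
        | (path) u where "(s, u) \<in> E" "(u, k) \<in> E"
        unfolding protected_edge_def by blast
      then show ?case
      proof cases
        case v_structure
        then show ?thesis using markov_equivalent_v_structure[OF me less.prems] by blast
      next
        case parent
        have "r < s" "s < k" using ordered parent(1) less.prems by auto
        then have "\<not> adjacent E r k" using parent(2) ordered unfolding adjacent_def by auto
        moreover have "(r, s) \<in> E'" using earlier parent(1) \<open>s < k\<close> by blast
        ultimately show ?thesis
          using markov_equivalent_orient_from_parent[OF me parent(1) less.prems] by blast
      next
        case path
        have "s < u" "u < k" using ordered path by auto
        then have "(s, u) \<in> E'" "(u, k) \<in> E'" using earlier less.IH path by auto
        then show ?thesis using markov_equivalent_orient_from_path[OF me less.prems] by blast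
      qed
    qed
  qed
qed

lemma MEC_eq_singleton_if_protected:
  fixes E :: "(nat \<times> nat) set"
  assumes "is_dag V E" "\<forall>(i, j)\<in>E. i < j" "\<forall>(s, k)\<in>E. protected_edge E s k"
  shows "MEC V E = {E}"
proof -
  have "markov_equivalent V E E" using assms(1) unfolding markov_equivalent_def by simp
  then show ?thesis
    using markov_equivalent_eq_if_protected[OF _ assms(2,3)] unfolding MEC_def by blast
qed

text \<open>Vertex \<open>n + 1\<close> receives the parents \<open>{n} \<union> T\<close> with \<open>T = f (n + 1) \<subseteq> {1..n - 1}\<close>,
  unless \<open>T\<close> is exactly the parent set of \<open>n\<close>: then the edge \<open>n \<rightarrow> n + 1\<close> would not be protected,
  and \<open>n + 1\<close> becomes a source instead.\<close>

definition new_parents :: "(nat \<times> nat) set \<Rightarrow> nat \<Rightarrow> nat set \<Rightarrow> nat set" where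
  "new_parents E n T = (if T = parents E n then {} else insert n T)"

fun protected_dag :: "(nat \<Rightarrow> nat set) \<Rightarrow> nat \<Rightarrow> (nat \<times> nat) set" where
  "protected_dag f 0 = {}"
| "protected_dag f (Suc n) =
     protected_dag f n \<union> new_parents (protected_dag f n) n (f (Suc n)) \<times> {Suc n}"

definition admissible :: "nat \<Rightarrow> (nat \<Rightarrow> nat set) \<Rightarrow> bool" where
  "admissible n f \<longleftrightarrow> (\<forall>k\<in>{1..n}. f k \<subseteq> {1..k - 2})"

lemma admissible_SucD:
  assumes "admissible (Suc n) f"
  shows "admissible n f" "f (Suc n) \<subseteq> {1..<n}"
proof -
  show "admissible n f" using assms unfolding admissible_def by auto
  have "Suc n \<in> {1..Suc n}" by simp
  then have "f (Suc n) \<subseteq> {1..Suc n - 2}" using assms unfolding admissible_def by blast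
  then show "f (Suc n) \<subseteq> {1..<n}" by (auto simp: subset_iff)
qed

lemma protected_dag_subset:
  "admissible n f \<Longrightarrow> protected_dag f n \<subseteq> {(i, j). 1 \<le> i \<and> i < j \<and> j \<le> n}"
proof (induction n)
  case 0
  show ?case by simp
next
  case (Suc n)
  have IH: "protected_dag f n \<subseteq> {(i, j). 1 \<le> i \<and> i < j \<and> j \<le> n}"
    using Suc admissible_SucD(1) by blast
  have T: "f (Suc n) \<subseteq> {1..<n}" using admissible_SucD(2)[OF Suc.prems] .
  have "new_parents (protected_dag f n) n (f (Suc n)) \<subseteq> {1..n}"
  proof (cases "n = 0")
    case True
    then have "f (Suc n) = parents (protected_dag f n) n" using T IH unfolding parents_def by auto
    then show ?thesis unfolding new_parents_def by simp
  next
    case False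
    then show ?thesis using T unfolding new_parents_def by auto
  qed
  then show ?case using IH by auto
qed

lemma is_dag_protected_dag: "admissible n f \<Longrightarrow> is_dag {1..n} (protected_dag f n)"
proof -
  assume "admissible n f"
  then have sub: "protected_dag f n \<subseteq> {(i, j). 1 \<le> i \<and> i < j \<and> j \<le> n}"
    by (rule protected_dag_subset)
  then have "protected_dag f n \<subseteq> less_than" by auto
  then have "acyclic (protected_dag f n)" using acyclic_subset wf_acyclic wf_less_than by blast
  then show ?thesis using sub unfolding is_dag_def by auto
qed

lemma protected_edge_add_sink:
  assumes "(s, k) \<in> E" "z \<notin> Field E" "protected_edge E s k"
  shows "protected_edge (E \<union> S \<times> {z}) s k"
proof -
  have "adjacent (E \<union> S \<times> {z}) s t \<longleftrightarrow> adjacent E s t" if "t \<in> Field E" for t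
    using that assms(1,2) unfolding adjacent_def by (auto intro: FieldI1 FieldI2)
  moreover have "(r, k) \<in> E \<union> S \<times> {z} \<longleftrightarrow> (r, k) \<in> E" for r
    using assms(1,2) by (auto intro: FieldI2)
  ultimately show ?thesis using assms(3) unfolding protected_edge_def by (auto intro: FieldI1)
qed

lemma protected_edge_new_parents:
  assumes E: "E \<subseteq> {(i, j). i < j \<and> j \<le> n}" and T: "T \<subseteq> {..<n}" and "T \<noteq> parents E n"
    and s: "s \<in> insert n T"
  shows "protected_edge (E \<union> insert n T \<times> {Suc n}) s (Suc n)"
proof -
  let ?E' = "E \<union> insert n T \<times> {Suc n}"
  have old: "(a, b) \<in> ?E' \<longleftrightarrow> (a, b) \<in> E" if "b \<noteq> Suc n" for a b
    using that by auto
  have ordered: "a < b \<and> b \<le> n" if "(a, b) \<in> E" for a b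
    using E that by auto
  show ?thesis
  proof (cases "s = n")
    case True
    from \<open>T \<noteq> parents E n\<close> obtain x where "x \<in> T \<and> (x, n) \<notin> E \<or> (x, n) \<in> E \<and> x \<notin> T"
      unfolding parents_def by blast
    then show ?thesis
    proof
      assume x: "x \<in> T \<and> (x, n) \<notin> E"
      then have "x < n" using T by auto
      then have "\<not> adjacent ?E' n x" using x old ordered unfolding adjacent_def by fastforce
      then show ?thesis using x \<open>x < n\<close> True unfolding protected_edge_def by blast
    next
      assume x: "(x, n) \<in> E \<and> x \<notin> T"
      then have "(x, Suc n) \<notin> ?E'" using ordered by fastforce
      then show ?thesis using x True unfolding protected_edge_def by blast
    qed
  next
    case False
    then have "s < n" using s T by auto
    show ?thesis
    proof (cases "(s, n) \<in> E")
      case True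
      then show ?thesis unfolding protected_edge_def by blast
    next
      case False
      then have "\<not> adjacent ?E' s n" using \<open>s < n\<close> old ordered unfolding adjacent_def by fastforce
      then show ?thesis using \<open>s < n\<close> unfolding protected_edge_def by blast
    qed
  qed
qed

lemma protected_dag_edges_protected:
  "admissible n f \<Longrightarrow> \<forall>(s, k)\<in>protected_dag f n. protected_edge (protected_dag f n) s k"
proof (induction n)
  case 0
  show ?case by simp
next
  case (Suc n)
  let ?E = "protected_dag f n" and ?T = "f (Suc n)"
  have adm: "admissible n f" and T: "?T \<subseteq> {..<n}" using admissible_SucD[OF Suc.prems] by auto
  show ?case
  proof (cases "?T = parents ?E n")
    case True
    then have "protected_dag f (Suc n) = ?E" by (simp add: new_parents_def)
    then show ?thesis using Suc.IH[OF adm] by simp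
  next
    case False
    let ?E' = "?E \<union> insert n ?T \<times> {Suc n}"
    have bound: "?E \<subseteq> {(i, j). i < j \<and> j \<le> n}" using protected_dag_subset[OF adm] by auto
    then have fresh: "Suc n \<notin> Field ?E" unfolding Field_def by auto
    have "protected_edge ?E' s k" if "(s, k) \<in> ?E'" for s k
    proof -
      from that consider "(s, k) \<in> ?E" | "s \<in> insert n ?T" "k = Suc n" by blast
      then show ?thesis
      proof cases
        case 1
        then show ?thesis
          using protected_edge_add_sink[OF 1 fresh] Suc.IH[OF adm] by blast
      next
        case 2
        then show ?thesis using protected_edge_new_parents[OF bound T False] by simp
      qed
    qed
    moreover have "protected_dag f (Suc n) = ?E'" using False by (simp add: new_parents_def)
    ultimately show ?thesis by auto
  qed
qed

lemma protected_dag_Suc_restrict: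
  assumes "admissible (Suc n) f"
  shows "protected_dag f n = protected_dag f (Suc n) \<inter> UNIV \<times> {..n}"
    and "parents (protected_dag f (Suc n)) (Suc n) = new_parents (protected_dag f n) n (f (Suc n))"
  using protected_dag_subset[OF admissible_SucD(1)[OF assms]] by (auto simp: parents_def)

lemma new_parents_inj:
  "n \<notin> T \<Longrightarrow> n \<notin> T' \<Longrightarrow> new_parents E n T = new_parents E n T' \<Longrightarrow> T = T'"
  unfolding new_parents_def by (auto split: if_splits simp: insert_ident)

lemma protected_dag_inj:
  "admissible n f \<Longrightarrow> admissible n g \<Longrightarrow> protected_dag f n = protected_dag g n
    \<Longrightarrow> \<forall>k\<in>{1..n}. f k = g k"
proof (induction n)
  case 0
  show ?case by simp
next
  case (Suc n)
  have "protected_dag f n = protected_dag g n"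
    using protected_dag_Suc_restrict(1) Suc.prems by metis
  then have IH: "\<forall>k\<in>{1..n}. f k = g k" using Suc admissible_SucD(1) by blast
  have "new_parents (protected_dag f n) n (f (Suc n)) = new_parents (protected_dag f n) n (g (Suc n))"
    using protected_dag_Suc_restrict(2) Suc.prems \<open>protected_dag f n = protected_dag g n\<close> by metis
  moreover have "n \<notin> f (Suc n)" "n \<notin> g (Suc n)"
    using admissible_SucD(2) Suc.prems by fastforce+
  ultimately have "f (Suc n) = g (Suc n)" using new_parents_inj by blast
  then show ?case using IH by (auto simp: le_Suc_eq)
qed

definition parent_choices :: "nat \<Rightarrow> (nat \<Rightarrow> nat set) set" where
  "parent_choices m = (\<Pi>\<^sub>E k\<in>{1..m}. Pow {1..k - 2})"

lemma admissible_parent_choices: "f \<in> parent_choices m \<Longrightarrow> admissible m f"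
  unfolding parent_choices_def admissible_def by auto

lemma inj_on_protected_dag: "inj_on (\<lambda>f. protected_dag f m) (parent_choices m)"
proof (rule inj_onI)
  fix f g assume f: "f \<in> parent_choices m" and g: "g \<in> parent_choices m"
    and "protected_dag f m = protected_dag g m"
  then have "\<forall>k\<in>{1..m}. f k = g k"
    using protected_dag_inj admissible_parent_choices by blast
  then show "f = g" using f g unfolding parent_choices_def by (metis PiE_ext)
qed

lemma sum_diff_two: "(\<Sum>k = 1..m. k - 2) = (m - 1) choose 2"
proof (induction m)
  case 0
  show ?case by simp
next
  case (Suc m)
  then show ?case by (cases m) (auto simp: numeral_2_eq_2)
qed

lemma card_parent_choices: "card (parent_choices m) = 2 ^ ((m - 1) choose 2)"
proof -
  have "card (parent_choices m) = (\<Prod>k = 1..m. 2 ^ (k - 2))"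
    unfolding parent_choices_def by (simp add: card_PiE card_Pow)
  also have "\<dots> = 2 ^ (\<Sum>k = 1..m. k - 2)" by (rule power_sum[symmetric])
  also have "\<dots> = 2 ^ ((m - 1) choose 2)" by (simp only: sum_diff_two)
  finally show ?thesis .
qed

lemma finite_dags: "finite V \<Longrightarrow> finite {E. is_dag V E}"
  by (rule finite_subset[of _ "Pow (V \<times> V)"]) (auto simp: is_dag_def)

lemma dag_split_sink:
  assumes "finite V" "V \<noteq> {}" "is_dag V E"
  obtains z S E' where "z \<in> V" "S \<subseteq> V - {z}" "is_dag (V - {z}) E'" "E = E' \<union> S \<times> {z}"
proof -
  have sub: "E \<subseteq> V \<times> V" and acyc: "acyclic E" using assms(3) unfolding is_dag_def by auto
  have "wf (E\<inverse>)"
    using finite_acyclic_wf_converse finite_subset[OF sub] assms(1) acyc by blast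
  then obtain z where z: "z \<in> V" "\<forall>y. (y, z) \<in> E\<inverse> \<longrightarrow> y \<notin> V"
    using assms(2) unfolding wf_eq_minimal by blast
  then have sink: "(z, y) \<notin> E" for y using sub by auto
  show ?thesis
  proof (rule that[OF z(1)])
    show "parents E z \<subseteq> V - {z}"
      using sub acyclic_not_refl[OF acyc] unfolding parents_def by auto
    show "is_dag (V - {z}) (E \<inter> (V - {z}) \<times> (V - {z}))"
      using acyclic_subset[OF acyc] unfolding is_dag_def by auto
    show "E = E \<inter> (V - {z}) \<times> (V - {z}) \<union> parents E z \<times> {z}"
      using sub sink unfolding parents_def by auto
  qed
qed

lemma choose_two_Suc: "Suc n choose 2 = n + (n choose 2)"
  by (simp add: numeral_2_eq_2)

lemma card_dags_le: "finite V \<Longrightarrow> card {E. is_dag V E} \<le> fact (card V) * 2 ^ (card V choose 2)"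
proof (induction "card V" arbitrary: V)
  case 0
  then have "{E. is_dag V E} = {{}}" unfolding is_dag_def by (auto simp: acyclic_def)
  then show ?case by simp
next
  case (Suc n V)
  define extend where
    "extend v = (\<lambda>(S, E'). E' \<union> S \<times> {v}) ` (Pow (V - {v}) \<times> {E'. is_dag (V - {v}) E'})" for v
  have finite_extend: "finite (extend v)" for v
    unfolding extend_def using finite_dags[of "V - {v}"] Suc.prems by simp
  have "{E. is_dag V E} \<subseteq> (\<Union>v\<in>V. extend v)"
  proof
    fix E assume "E \<in> {E. is_dag V E}"
    moreover have "V \<noteq> {}" using Suc.hyps(2) by auto
    ultimately obtain z S E' where "z \<in> V" "S \<subseteq> V - {z}" "is_dag (V - {z}) E'" "E = E' \<union> S \<times> {z}"
      using dag_split_sink[OF Suc.prems] by blast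
    then show "E \<in> (\<Union>v\<in>V. extend v)" unfolding extend_def by blast
  qed
  then have "card {E. is_dag V E} \<le> card (\<Union>v\<in>V. extend v)"
    using finite_extend Suc.prems by (intro card_mono) auto
  also have "\<dots> \<le> (\<Sum>v\<in>V. card (extend v))" by (rule card_UN_le) (rule Suc.prems)
  also have "\<dots> \<le> (\<Sum>v\<in>V. 2 ^ n * (fact n * 2 ^ (n choose 2)))"
  proof (rule sum_mono)
    fix v assume "v \<in> V"
    then have card: "card (V - {v}) = n" and fin: "finite (V - {v})"
      using Suc.hyps(2) Suc.prems by auto
    have "card (extend v) \<le> card (Pow (V - {v}) \<times> {E'. is_dag (V - {v}) E'})"
      unfolding extend_def using finite_dags[OF fin] fin by (intro card_image_le) simp
    also have "\<dots> = 2 ^ n * card {E'. is_dag (V - {v}) E'}"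
      using fin card by (simp add: card_cartesian_product card_Pow)
    also have "\<dots> \<le> 2 ^ n * (fact n * 2 ^ (n choose 2))"
      using Suc.hyps(1)[of "V - {v}"] card fin by simp
    finally show "card (extend v) \<le> 2 ^ n * (fact n * 2 ^ (n choose 2))" .
  qed
  also have "\<dots> = fact (Suc n) * 2 ^ (Suc n choose 2)"
    using Suc.hyps(2)[symmetric] by (simp add: choose_two_Suc power_add algebra_simps)
  finally show ?case using Suc.hyps(2) by simp
qed

lemma card_G_r_le: "card (G_r m) \<le> fact m * 2 ^ (m choose 2)"
proof -
  have "G_r m \<subseteq> {E. is_dag {1..m} E}" unfolding G_r_def by auto
  then have "card (G_r m) \<le> card {E. is_dag {1..m} E}" by (simp add: card_mono finite_dags)
  also have "\<dots> \<le> fact m * 2 ^ (m choose 2)" using card_dags_le[of "{1..m}"] by simp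
  finally show ?thesis .
qed

lemma card_G_r_ge: "2 ^ ((m - 1) choose 2) \<le> card (G_r m)"
proof -
  have "protected_dag f m \<in> G_r m" if "f \<in> parent_choices m" for f
  proof -
    have adm: "admissible m f" using that by (rule admissible_parent_choices)
    have ordered: "\<forall>(i, j)\<in>protected_dag f m. i < j" using protected_dag_subset[OF adm] by auto
    have "MEC {1..m} (protected_dag f m) = {protected_dag f m}"
      using is_dag_protected_dag[OF adm] ordered protected_dag_edges_protected[OF adm]
      by (rule MEC_eq_singleton_if_protected)
    then show ?thesis unfolding G_r_def using is_dag_protected_dag[OF adm] by simp
  qed
  then have "(\<lambda>f. protected_dag f m) ` parent_choices m \<subseteq> G_r m" by blast
  moreover have "finite (G_r m)"
    by (rule finite_subset[OF _ finite_dags[of "{1..m}"]]) (auto simp: G_r_def)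
  ultimately have "card ((\<lambda>f. protected_dag f m) ` parent_choices m) \<le> card (G_r m)"
    by (rule card_mono[rotated])
  then show ?thesis using card_parent_choices card_image[OF inj_on_protected_dag] by simp
qed

lemma of_nat_choose_two: "real (n choose 2) = real n * (real n - 1) / 2"
  by (induction n) (simp_all add: choose_two_Suc field_simps)

theorem lemma1:
  fixes m :: nat
  assumes "m \<ge> 1"
  shows "2 powr (real m * (real m - 3) / 2 + 1) \<le> real (card (G_r m))
       \<and> real (card (G_r m)) \<le> real (fact m) * 2 powr (real m * (real m - 1) / 2)
       \<and> ln (real (card (G_r m))) \<ge> (real m * (real m - 3) / 2 + 1) * ln 2"
proof -
  have "real m * (real m - 3) / 2 + 1 = real ((m - 1) choose 2)"
    using assms by (simp add: of_nat_choose_two of_nat_diff field_simps)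
  then have lower_eq: "2 powr (real m * (real m - 3) / 2 + 1) = real (2 ^ ((m - 1) choose 2))"
    by (simp add: powr_realpow)
  have upper_eq: "2 powr (real m * (real m - 1) / 2) = real (2 ^ (m choose 2))"
    by (simp add: of_nat_choose_two flip: powr_realpow)
  have lower: "2 powr (real m * (real m - 3) / 2 + 1) \<le> real (card (G_r m))"
    unfolding lower_eq using card_G_r_ge by (simp only: of_nat_le_iff)
  moreover have "real (card (G_r m)) \<le> real (fact m) * 2 powr (real m * (real m - 1) / 2)"
    unfolding upper_eq of_nat_mult[symmetric] using card_G_r_le by (simp only: of_nat_le_iff)
  moreover have "ln (real (card (G_r m))) \<ge> (real m * (real m - 3) / 2 + 1) * ln 2"
    using ln_mono[OF lower] by (simp add: ln_powr)
  ultimately show ?thesis by blast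
qed

end
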